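(* Let $\mathfrak S$ be a commutative semiring with identity and let $\sigma_{\mathfrak S}$ be a set of ideals of $\mathfrak S$ containing all maximal ideals of $\mathfrak S$. Then the Iséki space $\sigma_{\mathfrak S}$ (i.e. $\sigma_{\mathfrak S}$ with the ideal topology) is quasi-compact.
   Context: A semiring $(\mathfrak S,+,0,\cdot,1)$ has $(\mathfrak S,+,0)$ a commutative monoid, $(\mathfrak S,\cdot,1)$ a monoid, $0r=r0=0$, and two-sided distributivity; all semirings are commutative. An ideal of $\mathfrak S$ is a nonempty proper subset closed under addition and under multiplication by arbitrary elements of $\mathfrak S$; a maximal ideal is an ideal not properly contained in any other ideal. For an ideal $\mathfrak a$ put $\mathfrak a^{\uparrow}=\{\mathfrak x\in\sigma_{\mathfrak S}\mid \mathfrak a\subseteq\mathfrak x\}$. The ideal topology on $\sigma_{\mathfrak S}$ is the topology for which the sets $\mathfrak a^{\uparrow}$, $\mathfrak a$ ranging over ideals of $\mathfrak S$, form a subbasis of closed sets. Quasi-compact means every open cover has a finite subcover (no Hausdorff assumption). *)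

theory Defs
  imports "HOL-Analysis.Analysis"
begin

definition is_ideal :: "'a::comm_semiring_1 set \<Rightarrow> bool" where
  "is_ideal I \<longleftrightarrow> I \<noteq> {} \<and> I \<noteq> UNIV \<and>
     (\<forall>x\<in>I. \<forall>y\<in>I. x + y \<in> I) \<and> (\<forall>r x. x \<in> I \<longrightarrow> r * x \<in> I)"

definition is_maximal_ideal :: "'a::comm_semiring_1 set \<Rightarrow> bool" where
  "is_maximal_ideal M \<longleftrightarrow> is_ideal M \<and> (\<forall>J. is_ideal J \<and> M \<subseteq> J \<longrightarrow> J = M)"

definition ideal_up :: "'a set set \<Rightarrow> 'a set \<Rightarrow> 'a set set" where
  "ideal_up \<sigma> a = {x \<in> \<sigma>. a \<subseteq> x}"

text \<open>The ideal topology on sigma: the sets a-up (a an ideal) form a subbasis of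
  closed sets, i.e. their complements in sigma form a subbasis of open sets.\<close>
definition ideal_topology :: "'a::comm_semiring_1 set set \<Rightarrow> 'a set topology" where
  "ideal_topology \<sigma> = topology (arbitrary union_of
      (finite intersection_of (\<lambda>U. \<exists>a::'a set. is_ideal a \<and> U = \<sigma> - ideal_up \<sigma> a) relative_to \<sigma>))"

lemma topspace_ideal_topology: "topspace (ideal_topology \<sigma>) = \<sigma>"
  unfolding ideal_topology_def by simp

lemma openin_ideal_topology:
  "openin (ideal_topology \<sigma>) U \<longleftrightarrow> (arbitrary union_of
      (finite intersection_of (\<lambda>U. \<exists>a::'a::comm_semiring_1 set. is_ideal a \<and> U = \<sigma> - ideal_up \<sigma> a) relative_to \<sigma>)) U"
  unfolding ideal_topology_def by (rule openin_subbase)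

end

theory Submission
  imports Defs
begin

text \<open>By Alexander's subbase theorem it suffices to extract finite subcovers from covers of
  \<open>\<sigma>\<close> by subbasic open sets \<open>\<sigma> - a\<up>\<close>. If such sets cover \<open>\<sigma>\<close>, then no maximal ideal
  contains all the \<open>a\<close>, so by Krull's lemma the \<open>a\<close> generate the unit ideal: \<open>1\<close> is a
  finite sum of elements taken from finitely many of them. No ideal contains those finitely
  many \<open>a\<close>, so already their complements cover \<open>\<sigma>\<close>.\<close>

lemma compact_space_subbase:
  assumes "\<And>\<C>. \<C> \<subseteq> Collect P \<Longrightarrow> U \<subseteq> \<Union>\<C> \<Longrightarrow> \<exists>\<C>'. finite \<C>' \<and> \<C>' \<subseteq> \<C> \<and> U \<subseteq> \<Union>\<C>'"
  shows "compact_space (topology (arbitrary union_of (finite intersection_of P relative_to U)))"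
proof (rule Alexander_subbase_alt[where \<B> = "insert U (Collect P)"])
  show "U \<subseteq> \<Union>(insert U (Collect P))"
    by blast
  show "\<exists>\<C>'. finite \<C>' \<and> \<C>' \<subseteq> \<C> \<and> U \<subseteq> \<Union>\<C>'"
    if "\<C> \<subseteq> insert U (Collect P)" "U \<subseteq> \<Union>\<C>" for \<C>
  proof (cases "U \<in> \<C>")
    case True
    then show ?thesis
      by (intro exI[of _ "{U}"]) auto
  next
    case False
    with that(1) have "\<C> \<subseteq> Collect P"
      by blast
    then show ?thesis
      using that(2) by (rule assms)
  qed
  \<comment> \<open>The subbasic sets need not cover \<open>U\<close>; adding \<open>U\<close> to them does not change the topology.\<close>
  have same_subbase: "finite intersection_of (\<lambda>S. S \<in> insert U (Collect P)) relative_to U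
      = finite intersection_of P relative_to U"
  proof (intro ext iffI)
    fix T
    assume "(finite intersection_of (\<lambda>S. S \<in> insert U (Collect P)) relative_to U) T"
    then obtain \<U> where "finite \<U>" "\<U> \<subseteq> insert U (Collect P)" "T = U \<inter> \<Inter>\<U>"
      unfolding relative_to_def intersection_of_def by blast
    moreover have "U \<inter> \<Inter>\<U> = U \<inter> \<Inter>(\<U> - {U})"
      by blast
    ultimately show "(finite intersection_of P relative_to U) T"
      unfolding relative_to_def intersection_of_def by (metis finite_Diff subset_insert_iff)
  qed (auto elim: relative_to_mono intersection_of_mono)
  show "topology (arbitrary union_of
      (finite intersection_of (\<lambda>S. S \<in> insert U (Collect P)) relative_to U))
      = topology (arbitrary union_of (finite intersection_of P relative_to U))"
    by (simp only: same_subbase)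
qed

lemma zero_in_ideal: "is_ideal I \<Longrightarrow> 0 \<in> I"
  unfolding is_ideal_def by (metis ex_in_conv mult_zero_left)

lemma one_notin_ideal: "is_ideal I \<Longrightarrow> 1 \<notin> I"
  unfolding is_ideal_def by (metis UNIV_eq_I mult.right_neutral)

lemma is_ideal_Union_chain:
  assumes "\<C> \<noteq> {}" and chain: "subset.chain (Collect is_ideal) \<C>"
  shows "is_ideal (\<Union>\<C>)"
  unfolding is_ideal_def
proof (intro conjI ballI allI impI)
  have ideals: "\<And>I. I \<in> \<C> \<Longrightarrow> is_ideal I"
    using chain by (auto simp: subset.chain_def)
  show "\<Union>\<C> \<noteq> {}"
    using \<open>\<C> \<noteq> {}\<close> ideals zero_in_ideal by blast
  show "\<Union>\<C> \<noteq> UNIV"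
    using ideals one_notin_ideal by blast
  show "r * x \<in> \<Union>\<C>" if "x \<in> \<Union>\<C>" for r x
    using that ideals unfolding is_ideal_def by blast
  show "x + y \<in> \<Union>\<C>" if "x \<in> \<Union>\<C>" "y \<in> \<Union>\<C>" for x y
  proof -
    have "finite {x, y}" "{x, y} \<subseteq> \<Union>\<C>"
      using that by auto
    then obtain I where I: "I \<in> \<C>" "{x, y} \<subseteq> I"
      by (rule finite_subset_Union_chain[OF _ _ \<open>\<C> \<noteq> {}\<close> chain])
    then have "x + y \<in> I"
      using ideals[OF \<open>I \<in> \<C>\<close>] unfolding is_ideal_def by simp
    with I show ?thesis
      by blast
  qed
qed

lemma ideal_subset_maximal_ideal:
  assumes "is_ideal J"
  obtains M where "is_maximal_ideal M" "J \<subseteq> M"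
proof -
  have "\<exists>M\<in>{I. is_ideal I \<and> J \<subseteq> I}. \<forall>X\<in>{I. is_ideal I \<and> J \<subseteq> I}. M \<subseteq> X \<longrightarrow> X = M"
  proof (rule subset_Zorn_nonempty)
    show "\<Union>\<C> \<in> {I. is_ideal I \<and> J \<subseteq> I}"
      if "\<C> \<noteq> {}" "subset.chain {I. is_ideal I \<and> J \<subseteq> I} \<C>" for \<C>
    proof -
      have "subset.chain (Collect is_ideal) \<C>"
        using that(2) by (auto simp: subset.chain_def)
      with that(1) have "is_ideal (\<Union>\<C>)"
        by (rule is_ideal_Union_chain)
      moreover have "J \<subseteq> \<Union>\<C>"
        using that unfolding subset.chain_def by blast
      ultimately show ?thesis
        by blast
    qed
  qed (use assms in auto)
  then obtain M where M: "is_ideal M" "J \<subseteq> M"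
    and maximal: "\<And>X. is_ideal X \<Longrightarrow> J \<subseteq> X \<Longrightarrow> M \<subseteq> X \<Longrightarrow> X = M"
    by auto
  have "is_maximal_ideal M"
    unfolding is_maximal_ideal_def using M(1) maximal \<open>J \<subseteq> M\<close> by auto
  then show thesis
    using M(2) by (rule that)
qed

inductive_set ideal_span :: "'a::comm_semiring_1 set \<Rightarrow> 'a set" for S where
  zero: "0 \<in> ideal_span S"
| add: "s \<in> S \<Longrightarrow> x \<in> ideal_span S \<Longrightarrow> r * s + x \<in> ideal_span S"

lemma ideal_span_add: "x \<in> ideal_span S \<Longrightarrow> y \<in> ideal_span S \<Longrightarrow> x + y \<in> ideal_span S"
  by (induction x rule: ideal_span.induct) (auto simp: add.assoc intro: ideal_span.add)

lemma ideal_span_mult: "x \<in> ideal_span S \<Longrightarrow> r * x \<in> ideal_span S"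
proof (induction x rule: ideal_span.induct)
  case (add s x q)
  have "(r * q) * s + r * x \<in> ideal_span S"
    using add.hyps(1) add.IH by (rule ideal_span.add)
  then show ?case
    by (simp add: distrib_left mult.assoc)
qed (simp add: ideal_span.zero)

lemma ideal_span_superset: "S \<subseteq> ideal_span S"
  using ideal_span.add[OF _ ideal_span.zero, of _ S 1] by auto

lemma ideal_span_least: "is_ideal I \<Longrightarrow> S \<subseteq> I \<Longrightarrow> ideal_span S \<subseteq> I"
proof
  show "x \<in> I" if "is_ideal I" "S \<subseteq> I" "x \<in> ideal_span S" for x
    using that(3,1,2) by induction (auto simp: zero_in_ideal is_ideal_def)
qed

lemma ideal_span_mono: "S \<subseteq> T \<Longrightarrow> ideal_span S \<subseteq> ideal_span T"
proof
  show "x \<in> ideal_span T" if "S \<subseteq> T" "x \<in> ideal_span S" for x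
    using that(2,1) by induction (auto intro: ideal_span.intros)
qed

lemma ideal_span_finite_support:
  "x \<in> ideal_span S \<Longrightarrow> \<exists>T. finite T \<and> T \<subseteq> S \<and> x \<in> ideal_span T"
proof (induction x rule: ideal_span.induct)
  case (add s x r)
  then obtain T where "finite T" "T \<subseteq> S" "x \<in> ideal_span T"
    by blast
  then have "r * s + x \<in> ideal_span (insert s T)"
    using ideal_span_mono[of T "insert s T"] by (blast intro: ideal_span.add)
  with \<open>finite T\<close> \<open>T \<subseteq> S\<close> \<open>s \<in> S\<close> show ?case
    by blast
qed (blast intro: ideal_span.zero)

lemma is_ideal_ideal_span: "1 \<notin> ideal_span S \<Longrightarrow> is_ideal (ideal_span S)"
  unfolding is_ideal_def using ideal_span.zero ideal_span_add ideal_span_mult by blast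

lemma one_in_ideal_span:
  assumes "\<And>M. is_maximal_ideal M \<Longrightarrow> \<not> S \<subseteq> M"
  shows "1 \<in> ideal_span S"
proof (rule ccontr)
  assume "1 \<notin> ideal_span S"
  then obtain M where "is_maximal_ideal M" "ideal_span S \<subseteq> M"
    using is_ideal_ideal_span ideal_subset_maximal_ideal by blast
  with assms show False
    using ideal_span_superset by blast
qed

lemma finite_subfamily_not_in_ideal:
  fixes \<A> :: "'a::comm_semiring_1 set set"
  assumes "\<And>M. is_maximal_ideal M \<Longrightarrow> \<not> \<Union>\<A> \<subseteq> M"
  obtains \<F> where "finite \<F>" "\<F> \<subseteq> \<A>" "\<forall>I. is_ideal I \<longrightarrow> \<not> \<Union>\<F> \<subseteq> I"
proof -
  obtain T where T: "finite T" "T \<subseteq> \<Union>\<A>" and one: "1 \<in> ideal_span T"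
    using one_in_ideal_span[OF assms] ideal_span_finite_support by blast
  from T obtain \<F> where \<F>: "finite \<F>" "\<F> \<subseteq> \<A>" "T \<subseteq> \<Union>\<F>"
    by (rule finite_subset_Union)
  have "\<not> \<Union>\<F> \<subseteq> I" if "is_ideal I" for I
  proof
    assume "\<Union>\<F> \<subseteq> I"
    with \<F>(3) have "ideal_span T \<subseteq> I"
      using that by (intro ideal_span_least) auto
    with one that show False
      using one_notin_ideal by blast
  qed
  then have "\<forall>I. is_ideal I \<longrightarrow> \<not> \<Union>\<F> \<subseteq> I"
    by blast
  with \<F>(1,2) show thesis
    by (rule that)
qed

lemma ideal_subbase_finite_subcover:
  fixes \<sigma> :: "'a::comm_semiring_1 set set"
  assumes ideals: "\<forall>I\<in>\<sigma>. is_ideal I"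
    and maximals: "\<forall>M. is_maximal_ideal M \<longrightarrow> M \<in> \<sigma>"
    and subbasic: "\<C> \<subseteq> (\<lambda>a. \<sigma> - ideal_up \<sigma> a) ` Collect is_ideal"
    and cover: "\<sigma> \<subseteq> \<Union>\<C>"
  shows "\<exists>\<C>'. finite \<C>' \<and> \<C>' \<subseteq> \<C> \<and> \<sigma> \<subseteq> \<Union>\<C>'"
proof -
  obtain \<A> where \<C>: "\<C> = (\<lambda>a. \<sigma> - ideal_up \<sigma> a) ` \<A>"
    using subbasic unfolding subset_image_iff by blast
  have "\<not> \<Union>\<A> \<subseteq> M" if "is_maximal_ideal M" for M
  proof -
    have "M \<in> \<sigma>"
      using maximals that by blast
    then obtain a where "a \<in> \<A>" "M \<notin> ideal_up \<sigma> a"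
      using cover unfolding \<C> by blast
    with \<open>M \<in> \<sigma>\<close> show ?thesis
      unfolding ideal_up_def by blast
  qed
  then obtain \<F> where \<F>: "finite \<F>" "\<F> \<subseteq> \<A>"
    and not_in_ideal: "\<forall>I. is_ideal I \<longrightarrow> \<not> \<Union>\<F> \<subseteq> I"
    by (rule finite_subfamily_not_in_ideal)
  have "\<sigma> \<subseteq> \<Union>((\<lambda>a. \<sigma> - ideal_up \<sigma> a) ` \<F>)"
  proof
    fix x
    assume "x \<in> \<sigma>"
    with ideals have "is_ideal x"
      by blast
    with not_in_ideal have "\<not> \<Union>\<F> \<subseteq> x"
      by simp
    then obtain a where "a \<in> \<F>" "\<not> a \<subseteq> x"
      by (meson Union_least)
    with \<open>x \<in> \<sigma>\<close> have "x \<in> \<sigma> - ideal_up \<sigma> a"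
      by (simp add: ideal_up_def)
    with \<open>a \<in> \<F>\<close> show "x \<in> \<Union>((\<lambda>a. \<sigma> - ideal_up \<sigma> a) ` \<F>)"
      by blast
  qed
  moreover have "(\<lambda>a. \<sigma> - ideal_up \<sigma> a) ` \<F> \<subseteq> \<C>"
    unfolding \<C> using \<F>(2) by (rule image_mono)
  ultimately show ?thesis
    using \<F>(1) by (meson finite_imageI)
qed

theorem theorem3p3:
  fixes \<sigma> :: "'a::comm_semiring_1 set set"
  assumes "\<forall>I\<in>\<sigma>. is_ideal I"
    and "\<forall>M. is_maximal_ideal M \<longrightarrow> M \<in> \<sigma>"
  shows "compact_space (ideal_topology \<sigma>)"
  unfolding ideal_topology_def
proof (rule compact_space_subbase)
  fix \<C>
  assume "\<C> \<subseteq> {U. \<exists>a. is_ideal a \<and> U = \<sigma> - ideal_up \<sigma> a}" and cover: "\<sigma> \<subseteq> \<Union>\<C>"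
  then have "\<C> \<subseteq> (\<lambda>a. \<sigma> - ideal_up \<sigma> a) ` Collect is_ideal"
    by auto
  then show "\<exists>\<C>'. finite \<C>' \<and> \<C>' \<subseteq> \<C> \<and> \<sigma> \<subseteq> \<Union>\<C>'"
    using cover by (rule ideal_subbase_finite_subcover[OF assms])
qed

end
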